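(* Suppose that (AA) holds. Let $T,\varepsilon,\eta>0$. Then there exists $\kappa>0$ such that $\liminf_{n\to\infty}\mathbb{P}\Big(\max_{1\le k\le K}\sup_{t\in[0,T]}\sup_{x\in\mathbb{R}_+}\bar{\mathcal{R}}^n_k(t)(I^\kappa_x)\le\varepsilon\Big)\ge1-\eta$.
   Context: For $x\in\mathbb{R}_+$ and $\kappa>0$, $I^\kappa_x=((x-\kappa)^+,x+\kappa)$. Fix $K\in\mathbb{N}$. For each $1\le k\le K$, $E_k(\cdot)$ is a renewal process with rate $\lambda_k\in(0,\infty)$ and strictly positive interarrival times, and $E^n_k(t)=E_k(nt)$; $\tau^n_{k,i}$ is the time of the $i$-th jump of $E^n_k$. $\Gamma_k$ is a continuous probability distribution on $(0,\infty)$ with finite mean. Assumption (AA): for each $n$ there are $K$ independent sequences $\{g^n_{k,i}\}_{i\in\mathbb{N}}$ of strictly positive i.i.d. random variables, independent of the arrival processes, with $g^n_{k,1}\sim\Gamma^n_k$ of finite mean, such that $\lim_{M\to\infty}\sup_n\int_{(M,\infty)}x\,\Gamma^n_k(dx)=0$ and $\Gamma^n_k\to\Gamma_k$ weakly for each $k$. $\delta^+_x$: unit mass at $x$ if $x>0$, zero otherwise. $g^n_{k,i}(t)=(g^n_{k,i}-(t-\tau^n_{k,i})^+)^+$, $\bar{\mathcal{R}}^n_k(t)=\frac1n\sum_{i=1}^{E^n_k(t)}\delta^+_{g^n_{k,i}(t)}$. *)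

theory Defs
  imports "HOL-Probability.Probability"
begin

definition renewal_count :: "(nat \<Rightarrow> real) \<Rightarrow> real \<Rightarrow> nat" where
  "renewal_count v t = card {m::nat. 1 \<le> m \<and> (\<Sum>j<m. v j) \<le> t}"

definition interval_I :: "real \<Rightarrow> real \<Rightarrow> real set" where
  "interval_I \<kappa> x = {max 0 (x - \<kappa>) <..< x + \<kappa>}"

definition residual :: "real \<Rightarrow> real \<Rightarrow> real \<Rightarrow> real" where
  "residual gv \<tau> t = max 0 (gv - max 0 (t - \<tau>))"

text \<open>Scaled measure-valued process evaluated on a set A:
  Rbar^n(t)(A) = (1/n) sum_{i=1}^{E(nt)} delta^+_{g_i(t)}(A), with 0-based indices:
  arrival number i+1 happens (for E^n) at time (v 0 + ... + v i)/n and carries g i.\<close>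
definition Rbar :: "nat \<Rightarrow> (nat \<Rightarrow> real) \<Rightarrow> (nat \<Rightarrow> real) \<Rightarrow> real \<Rightarrow> real set \<Rightarrow> real" where
  "Rbar n v gs t A = (1 / real n) * real (card {i. i < renewal_count v (real n * t) \<and>
      residual (gs i) ((\<Sum>j\<le>i. v j) / real n) t > 0 \<and>
      residual (gs i) ((\<Sum>j\<le>i. v j) / real n) t \<in> A})"

definition gen_sigma :: "'a measure \<Rightarrow> ('i \<Rightarrow> 'a \<Rightarrow> real) \<Rightarrow> 'i set \<Rightarrow> 'a set set" where
  "gen_sigma M X I = sigma_sets (space M) (\<Union>i\<in>I. {X i -` B \<inter> space M | B. B \<in> sets borel})"

end

theory Submission
  imports Defs
begin

text \<open>Fix a class \<open>k\<close> and cut its arrival sequence into blocks of \<open>b \<approx> n/q\<close> consecutive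
  arrivals. With high probability (Hoeffding for truncated interarrival times, Markov for the
  excesses over the truncation level) the first \<open>L\<close> blocks already cover the horizon \<open>n T\<close> and
  every block lasts at most \<open>n h/2\<close>. Within one block all entry times are then within \<open>h/2\<close> of
  each other, so at any time \<open>t\<close> the jobs of the block whose residual lies in \<open>I_x^{h/4}\<close> have
  initial service times in one window of length \<open>h\<close>, hence in one cell of a fixed grid of
  \<open>J + 1\<close> cells. Because \<open>\<Gamma>\<close> has no atoms, each cell has \<open>\<Gamma>\<close>-mass, and by weak convergence
  eventually \<open>\<Gamma>\<^sup>n\<close>-mass, below \<open>\<theta>\<close>; by Hoeffding and a union bound over the \<open>L (J + 1)\<close>
  pairs (block, cell), no block puts more than \<open>2 b \<theta>\<close> jobs into one cell. Altogether
  \<open>R^n(t)(I_x^{h/4}) \<le> 2 L b \<theta> / n \<le> \<epsilon>\<close> uniformly in \<open>t, x\<close>, and a union bound over the classes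
  finishes the proof.\<close>

section \<open>Renewal counts\<close>

lemma finite_renewal_epochs_iff:
  assumes nonneg: "\<And>j. v j \<ge> (0::real)"
  shows "finite {m::nat. 1 \<le> m \<and> (\<Sum>j<m. v j) \<le> s} \<longleftrightarrow> (\<exists>m. s < (\<Sum>j<m. v j))"
proof
  assume "finite {m::nat. 1 \<le> m \<and> (\<Sum>j<m. v j) \<le> s}"
  moreover have "infinite {1::nat..}" by (rule infinite_Ici)
  ultimately show "\<exists>m. s < (\<Sum>j<m. v j)"
    by (metis (mono_tags, lifting) Collect_mono atLeast_def finite_subset not_less)
next
  assume "\<exists>m. s < (\<Sum>j<m. v j)"
  then obtain m where m: "s < (\<Sum>j<m. v j)" ..
  have mono: "(\<Sum>j<m. v j) \<le> (\<Sum>j<m'. v j)" if "m \<le> m'" for m'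
    using that by (intro sum_mono2) (auto simp: nonneg)
  have "{m'. 1 \<le> m' \<and> (\<Sum>j<m'. v j) \<le> s} \<subseteq> {..<m}"
  proof
    fix m' assume "m' \<in> {m'. 1 \<le> m' \<and> (\<Sum>j<m'. v j) \<le> s}"
    thus "m' \<in> {..<m}" using mono[of m'] m by (cases "m \<le> m'") auto
  qed
  thus "finite {m::nat. 1 \<le> m \<and> (\<Sum>j<m. v j) \<le> s}" using finite_subset by blast
qed

lemma renewal_count_gt_iff:
  assumes nonneg: "\<And>j. v j \<ge> (0::real)"
  shows "i < renewal_count v s \<longleftrightarrow> (\<Sum>j\<le>i. v j) \<le> s \<and> (\<exists>m. s < (\<Sum>j<m. v j))"
proof -
  define A where "A = {m::nat. 1 \<le> m \<and> (\<Sum>j<m. v j) \<le> s}"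
  have count: "renewal_count v s = card A" unfolding renewal_count_def A_def ..
  have down_closed: "m' \<in> A" if "m \<in> A" "1 \<le> m'" "m' \<le> m" for m m'
    using that order_trans[OF sum_mono2[of "{..<m}" "{..<m'}" v]] by (auto simp: A_def nonneg)
  have "Suc i \<in> A \<longleftrightarrow> (\<Sum>j\<le>i. v j) \<le> s" by (simp add: A_def lessThan_Suc_atMost)
  moreover have "i < card A \<longleftrightarrow> finite A \<and> Suc i \<in> A"
  proof
    assume i: "i < card A"
    hence "finite A" by (metis card.infinite less_nat_zero_code)
    moreover have "Suc i \<in> A"
    proof (rule ccontr)
      assume "Suc i \<notin> A"
      hence "A \<subseteq> {1..i}" using down_closed[of _ "Suc i"] by (force simp: A_def not_less_eq_eq)
      thus False using card_mono[of "{1..i}" A] i by simp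
    qed
    ultimately show "finite A \<and> Suc i \<in> A" ..
  next
    assume "finite A \<and> Suc i \<in> A"
    moreover have "{1..Suc i} \<subseteq> A" using calculation down_closed by auto
    ultimately show "i < card A" using card_mono[of A "{1..Suc i}"] by simp
  qed
  ultimately show ?thesis
    using finite_renewal_epochs_iff[OF nonneg] by (auto simp: count A_def)
qed

section \<open>Counting arrivals block by block\<close>

definition counted_arrivals ::
    "nat \<Rightarrow> (nat \<Rightarrow> real) \<Rightarrow> (nat \<Rightarrow> real) \<Rightarrow> real \<Rightarrow> real set \<Rightarrow> nat set" where
  "counted_arrivals n v gs t A = {i. i < renewal_count v (real n * t) \<and>
      residual (gs i) ((\<Sum>j\<le>i. v j) / real n) t > 0 \<and>
      residual (gs i) ((\<Sum>j\<le>i. v j) / real n) t \<in> A}"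

lemma Rbar_eq_card_counted_arrivals:
  "Rbar n v gs t A = real (card (counted_arrivals n v gs t A)) / real n"
  by (simp add: Rbar_def counted_arrivals_def)

lemma finite_counted_arrivals: "finite (counted_arrivals n v gs t A)"
  by (rule finite_subset[of _ "{..<renewal_count v (real n * t)}"]) (auto simp: counted_arrivals_def)

lemma service_time_in_block_window:
  assumes nonneg: "\<And>j. v j \<ge> (0::real)" and n: "n \<ge> 1"
    and i: "i \<in> counted_arrivals n v gs t (interval_I (h/4) x)"
    and block: "l * b \<le> i" "i < Suc l * b"
    and block_length: "(\<Sum>j\<in>{l*b..<Suc l*b}. v j) \<le> real n * h / 2"
  shows "gs i \<in> {t + x - 3*h/4 - (\<Sum>j<l*b. v j) / real n <..< t + x + h/4 - (\<Sum>j<l*b. v j) / real n}"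
proof -
  have npos: "real n > 0" using n by simp
  define \<tau> where "\<tau> = (\<Sum>j\<le>i. v j) / real n"
  define P where "P = (\<Sum>j<l*b. v j)"
  define S where "S = (\<Sum>j\<in>{l*b..i}. v j)"
  have "{..i} = {..<l*b} \<union> {l*b..i}" using block by auto
  hence "(\<Sum>j\<le>i. v j) = P + S" unfolding P_def S_def by (subst sum.union_disjoint[symmetric]) auto
  hence \<tau>: "\<tau> = P / real n + S / real n" by (simp add: \<tau>_def add_divide_distrib)
  have "0 \<le> S" unfolding S_def by (intro sum_nonneg) (simp add: nonneg)
  moreover have "S \<le> (\<Sum>j\<in>{l*b..<Suc l*b}. v j)"
    unfolding S_def using block by (intro sum_mono2) (auto simp: nonneg)
  hence "S \<le> real n * h / 2" using block_length by linarith
  ultimately have S: "0 \<le> S / real n" "S / real n \<le> h / 2"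
    using npos by (auto simp: divide_le_eq mult.commute)
  have "(\<Sum>j\<le>i. v j) \<le> real n * t"
    using i renewal_count_gt_iff[OF nonneg] by (auto simp: counted_arrivals_def)
  hence "\<tau> \<le> t" using npos by (simp add: \<tau>_def divide_le_eq mult.commute)
  moreover have "residual (gs i) \<tau> t > 0" "residual (gs i) \<tau> t \<in> interval_I (h/4) x"
    using i by (auto simp: counted_arrivals_def \<tau>_def)
  ultimately have "x - h/4 < gs i - (t - \<tau>)" "gs i - (t - \<tau>) < x + h/4"
    by (auto simp: residual_def interval_I_def)
  thus ?thesis using \<tau> S by (simp add: P_def)
qed

lemma counted_arrivals_index_less:
  assumes nonneg: "\<And>j. v j \<ge> (0::real)"
    and horizon: "real n * T < (\<Sum>j<N. v j)" and t: "t \<in> {0..T}"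
    and i: "i \<in> counted_arrivals n v gs t A"
  shows "i < N"
proof -
  have "(\<Sum>j\<le>i. v j) \<le> real n * t"
    using i renewal_count_gt_iff[OF nonneg] by (auto simp: counted_arrivals_def)
  also have "\<dots> \<le> real n * T" using t by (simp add: mult_left_mono)
  finally have "(\<Sum>j\<le>i. v j) < (\<Sum>j<N. v j)" using horizon by linarith
  thus "i < N" using sum_mono2[of "{..i}" "{..<N}" v] nonneg by (force simp: not_less)
qed

text \<open>Overlapping cells of length \<open>2 h\<close> at spacing \<open>h\<close>, so that every window of length \<open>h\<close>
  in \<open>(0, \<infinity>)\<close> lies in one of them; the last cell is the whole tail beyond \<open>J h\<close>.\<close>
definition grid_cell :: "real \<Rightarrow> nat \<Rightarrow> nat \<Rightarrow> real set" where
  "grid_cell h J j = (if j < J then {real j * h <.. (real j + 2) * h} else {real J * h <..})"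

lemma grid_cell_borel [measurable]: "grid_cell h J j \<in> sets borel"
  by (simp add: grid_cell_def)

lemma grid_cell_covers_window:
  assumes h: "h > 0"
  obtains j where "j \<le> J" "\<And>y. 0 < y \<Longrightarrow> c < y \<Longrightarrow> y < c + h \<Longrightarrow> y \<in> grid_cell h J j"
proof (cases "real J * h \<le> c \<or> c < 0")
  case True
  thus ?thesis using h that[of "if c < 0 then 0 else J"]
    by (cases J) (auto simp: grid_cell_def)
next
  case False
  define j where "j = nat \<lfloor>c / h\<rfloor>"
  have "real j = of_int \<lfloor>c / h\<rfloor>" using False h by (simp add: j_def)
  hence "real j \<le> c / h" "c / h < real j + 1" by linarith+
  hence lo: "real j * h \<le> c" and hi: "c < (real j + 1) * h" using h by (simp_all add: field_simps)
  have "real j * h < real J * h" using lo False by linarith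
  hence "j < J" using h by simp
  thus ?thesis using lo hi that[of j] by (auto simp: grid_cell_def algebra_simps)
qed

lemma card_counted_arrivals_le:
  fixes v gs :: "nat \<Rightarrow> real"
  assumes v_pos: "\<And>j. v j > 0" and gs_pos: "\<And>j. gs j > 0"
    and n: "n \<ge> 1" and b: "b \<ge> 1" and h: "h > 0"
    and horizon: "real n * T < (\<Sum>j<L*b. v j)"
    and block_length: "\<And>l. l < L \<Longrightarrow> (\<Sum>j\<in>{l*b..<Suc l*b}. v j) \<le> real n * h / 2"
    and cell_count: "\<And>l j. l < L \<Longrightarrow> j \<le> J \<Longrightarrow>
      real (card {i\<in>{l*b..<Suc l*b}. gs i \<in> grid_cell h J j}) \<le> c"
    and t: "t \<in> {0..T}"
  shows "real (card (counted_arrivals n v gs t (interval_I (h/4) x))) \<le> real L * c"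
proof -
  have nonneg: "\<And>j. v j \<ge> 0" using v_pos less_imp_le by blast
  define w where "w l = t + x - 3*h/4 - (\<Sum>j<l*b. v j) / real n" for l
  have "\<exists>j. j \<le> J \<and> (\<forall>y. 0 < y \<longrightarrow> w l < y \<longrightarrow> y < w l + h \<longrightarrow> y \<in> grid_cell h J j)" for l
    by (rule grid_cell_covers_window[OF h]) blast
  then obtain cell where cell: "\<And>l. cell l \<le> J"
    "\<And>l y. 0 < y \<Longrightarrow> w l < y \<Longrightarrow> y < w l + h \<Longrightarrow> y \<in> grid_cell h J (cell l)"
    by metis
  define C where "C = counted_arrivals n v gs t (interval_I (h/4) x)"
  have "C \<subseteq> (\<Union>l<L. {i\<in>{l*b..<Suc l*b}. gs i \<in> grid_cell h J (cell l)})"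
  proof
    fix i assume i: "i \<in> C"
    have "i < L * b" using counted_arrivals_index_less[OF nonneg horizon t] i by (simp add: C_def)
    hence l: "i div b < L" by (simp add: less_mult_imp_div_less)
    have block: "i div b * b \<le> i" "i < Suc (i div b) * b"
      using b dividend_less_div_times[of b i] by (auto simp: div_times_less_eq_dividend)
    have "gs i \<in> grid_cell h J (cell (i div b))" (is "gs i \<in> ?cell")
      using service_time_in_block_window[OF nonneg n i[unfolded C_def] block block_length[OF l]]
        cell(2) gs_pos by (simp add: w_def)
    show "i \<in> (\<Union>l<L. {i\<in>{l*b..<Suc l*b}. gs i \<in> grid_cell h J (cell l)})"
      using l block \<open>gs i \<in> ?cell\<close> by (intro UN_I[of "i div b"]) simp_all
  qed
  hence "card C \<le> card (\<Union>l<L. {i\<in>{l*b..<Suc l*b}. gs i \<in> grid_cell h J (cell l)})"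
    by (intro card_mono) auto
  also have "\<dots> \<le> (\<Sum>l<L. card {i\<in>{l*b..<Suc l*b}. gs i \<in> grid_cell h J (cell l)})"
    by (rule card_UN_le) simp
  finally have "real (card C) \<le> real (\<Sum>l<L. card {i\<in>{l*b..<Suc l*b}. gs i \<in> grid_cell h J (cell l)})"
    by (simp only: of_nat_le_iff)
  also have "\<dots> = (\<Sum>l<L. real (card {i\<in>{l*b..<Suc l*b}. gs i \<in> grid_cell h J (cell l)}))"
    by (rule of_nat_sum)
  also have "\<dots> \<le> (\<Sum>l<L. c)" by (intro sum_mono cell_count cell(1)) simp
  finally show ?thesis by (simp add: C_def)
qed

lemma Rbar_le_of_block_bounds:
  fixes v gs :: "nat \<Rightarrow> real"
  assumes v_pos: "\<And>j. v j > 0" and gs_pos: "\<And>j. gs j > 0"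
    and n: "n \<ge> 1" and b: "b \<ge> 1" and h: "h > 0"
    and horizon: "real n * T < (\<Sum>j<L*b. max 0 (min (v j) B))"
    and excess: "(\<Sum>j<L*b. max 0 (v j - B)) < real n * h / 4" and "4 * real b * B \<le> real n * h"
    and cell_count: "\<And>l j. l < L \<Longrightarrow> j \<le> J \<Longrightarrow>
      (\<Sum>i\<in>{l*b..<Suc l*b}. indicator (grid_cell h J j) (gs i)) \<le> c"
    and "real L * c \<le> \<epsilon> * real n" and t: "t \<in> {0..T}"
  shows "Rbar n v gs t (interval_I (h/4) x) \<le> \<epsilon>"
proof -
  have "(\<Sum>j<L*b. max 0 (min (v j) B)) \<le> (\<Sum>j<L*b. v j)"
    using v_pos by (intro sum_mono) (auto intro: less_imp_le)
  hence horizon': "real n * T < (\<Sum>j<L*b. v j)" using horizon by linarith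
  have "(\<Sum>j\<in>{l*b..<Suc l*b}. v j) \<le> real n * h / 2" if "l < L" for l
  proof -
    have "(\<Sum>j\<in>{l*b..<Suc l*b}. v j) \<le> (\<Sum>j\<in>{l*b..<Suc l*b}. B + max 0 (v j - B))"
      by (intro sum_mono) auto
    also have "\<dots> = real b * B + (\<Sum>j\<in>{l*b..<Suc l*b}. max 0 (v j - B))"
      by (simp add: sum.distrib)
    also have "(\<Sum>j\<in>{l*b..<Suc l*b}. max 0 (v j - B)) \<le> (\<Sum>j<L*b. max 0 (v j - B))"
    proof (rule sum_mono2)
      show "{l*b..<Suc l*b} \<subseteq> {..<L*b}" using that mult_le_mono1[of "Suc l" L b] by auto
    qed auto
    finally show ?thesis using excess \<open>4 * real b * B \<le> real n * h\<close> by simp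
  qed
  moreover have "real (card {i\<in>{l*b..<Suc l*b}. gs i \<in> grid_cell h J j}) \<le> c" if "l < L" "j \<le> J" for l j
    using cell_count[OF that] by (simp add: indicator_def Int_def conj_commute)
  ultimately have "real (card (counted_arrivals n v gs t (interval_I (h/4) x))) \<le> real L * c"
    by (intro card_counted_arrivals_le[OF v_pos gs_pos n b h horizon' _ _ t])
  thus ?thesis using n \<open>real L * c \<le> \<epsilon> * real n\<close>
    by (simp add: Rbar_eq_card_counted_arrivals divide_le_eq)
qed

section \<open>Measurability of the uniform bound\<close>

lemma renewal_count_gt_right_stable:
  assumes nonneg: "\<And>j. v j \<ge> (0::real)" and "i < renewal_count v s0"
  shows "\<exists>d>0. \<forall>s. s0 \<le> s \<longrightarrow> s < s0 + d \<longrightarrow> i < renewal_count v s"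
proof -
  obtain m where arrived: "(\<Sum>j\<le>i. v j) \<le> s0" and m: "s0 < (\<Sum>j<m. v j)"
    using assms(2) unfolding renewal_count_gt_iff[OF nonneg] by blast
  show ?thesis
  proof (intro exI[of _ "(\<Sum>j<m. v j) - s0"] conjI allI impI)
    fix s assume "s0 \<le> s" "s < s0 + ((\<Sum>j<m. v j) - s0)"
    thus "i < renewal_count v s" unfolding renewal_count_gt_iff[OF nonneg] using arrived by auto
  qed (use m in simp)
qed

lemma counted_arrivals_right_stable:
  assumes nonneg: "\<And>j. v j \<ge> (0::real)" and n: "n \<ge> 1"
    and i: "i \<in> counted_arrivals n v gs t0 (interval_I \<kappa> x0)"
  shows "\<exists>d>0. \<forall>t x. t0 \<le> t \<longrightarrow> t < t0 + d \<longrightarrow> x0 \<le> x \<longrightarrow> x < x0 + d \<longrightarrow>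
           i \<in> counted_arrivals n v gs t (interval_I \<kappa> x)"
proof -
  have npos: "real n > 0" using n by simp
  define \<tau> where "\<tau> = (\<Sum>j\<le>i. v j) / real n"
  from i have arrived: "i < renewal_count v (real n * t0)"
    and res_pos: "residual (gs i) \<tau> t0 > 0"
    and res_in: "residual (gs i) \<tau> t0 \<in> interval_I \<kappa> x0"
    by (auto simp: counted_arrivals_def \<tau>_def)
  obtain d where "d > 0" and d: "\<And>s. real n * t0 \<le> s \<Longrightarrow> s < real n * t0 + d \<Longrightarrow> i < renewal_count v s"
    using renewal_count_gt_right_stable[OF nonneg arrived] by blast
  have "\<tau> \<le> t0"
    using arrived npos renewal_count_gt_iff[OF nonneg] by (auto simp: \<tau>_def divide_le_eq mult.commute)
  define w where "w = gs i + \<tau> - t0"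
  have w: "residual (gs i) \<tau> t0 = max 0 w" using \<open>\<tau> \<le> t0\<close> by (simp add: residual_def w_def)
  have "w > 0" using res_pos w by simp
  hence w_in: "max 0 (x0 - \<kappa>) < w" "w < x0 + \<kappa>" using res_in w by (auto simp: interval_I_def)
  define d2 where "d2 = min w (w - max 0 (x0 - \<kappa>)) / 2"
  have "d / real n > 0" using \<open>d > 0\<close> npos by simp
  moreover have "d2 > 0" using \<open>w > 0\<close> w_in by (simp add: d2_def)
  ultimately have "min (d / real n) d2 > 0" by simp
  show ?thesis
  proof (intro exI[of _ "min (d / real n) d2"] conjI allI impI \<open>min (d / real n) d2 > 0\<close>)
    fix t x assume t: "t0 \<le> t" "t < t0 + min (d / real n) d2"
      and x: "x0 \<le> x" "x < x0 + min (d / real n) d2"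
    have "real n * t < real n * (t0 + d / real n)" using t npos by simp
    also have "\<dots> = real n * t0 + d" using npos by (simp add: field_simps)
    finally have "real n * t < real n * t0 + d" .
    moreover have "real n * t0 \<le> real n * t" using t(1) npos by simp
    ultimately have arrived_t: "i < renewal_count v (real n * t)" using d by blast
    have "t - t0 < d2" "x - x0 < d2" using t x by simp_all
    hence small: "t - t0 < w / 2" "t - t0 < (w - max 0 (x0 - \<kappa>)) / 2"
      "x - x0 < (w - max 0 (x0 - \<kappa>)) / 2" by (auto simp: d2_def)
    have res: "residual (gs i) \<tau> t = w - (t - t0)"
      using \<open>\<tau> \<le> t0\<close> t(1) small(1) by (simp add: residual_def w_def)
    have "max 0 (x - \<kappa>) \<le> max 0 (x0 - \<kappa>) + (x - x0)" using x(1) by simp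
    hence "w - (t - t0) \<in> interval_I \<kappa> x"
      using t(1) x(1) small w_in by (simp add: interval_I_def)
    moreover have "w - (t - t0) > 0" using small(1) \<open>w > 0\<close> by simp
    ultimately show "i \<in> counted_arrivals n v gs t (interval_I \<kappa> x)"
      using arrived_t res by (simp add: counted_arrivals_def \<tau>_def)
  qed
qed

text \<open>Since the counts are right-continuous from above in \<open>(t, x)\<close>, a supremum over
  \<open>[0, T] \<times> [0, \<infinity>)\<close> may be taken over rational points (and \<open>t = T\<close>).\<close>
lemma counted_arrivals_rational_dominated:
  assumes nonneg: "\<And>j. v j \<ge> (0::real)" and n: "n \<ge> 1"
    and t0: "t0 \<in> {0..T}" and x0: "x0 \<ge> 0"
  obtains t x where "t \<in> insert T (\<rat> \<inter> {0..T})" "x \<in> \<rat> \<inter> {0..}"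
    "card (counted_arrivals n v gs t0 (interval_I \<kappa> x0)) \<le> card (counted_arrivals n v gs t (interval_I \<kappa> x))"
proof -
  define F where "F = counted_arrivals n v gs t0 (interval_I \<kappa> x0)"
  have "\<forall>i\<in>F. \<exists>d>0. \<forall>t x. t0 \<le> t \<longrightarrow> t < t0 + d \<longrightarrow> x0 \<le> x \<longrightarrow> x < x0 + d \<longrightarrow>
           i \<in> counted_arrivals n v gs t (interval_I \<kappa> x)"
    using counted_arrivals_right_stable[OF nonneg n] by (simp add: F_def)
  then obtain d where d: "\<And>i. i \<in> F \<Longrightarrow> d i > 0"
    "\<And>i t x. i \<in> F \<Longrightarrow> t0 \<le> t \<Longrightarrow> t < t0 + d i \<Longrightarrow> x0 \<le> x \<Longrightarrow> x < x0 + d i \<Longrightarrow>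
           i \<in> counted_arrivals n v gs t (interval_I \<kappa> x)"
    by metis
  have "finite F" by (simp add: F_def finite_counted_arrivals)
  define \<delta> where "\<delta> = Min (insert 1 (d ` F))"
  have "\<delta> > 0" unfolding \<delta>_def using \<open>finite F\<close> d(1) by (subst Min_gr_iff) auto
  have \<delta>_le: "\<delta> \<le> d i" if "i \<in> F" for i unfolding \<delta>_def using \<open>finite F\<close> that by (intro Min_le) auto
  obtain x where x: "x \<in> \<rat>" "x0 < x" "x < x0 + \<delta>"
    using Rats_dense_in_real[of x0 "x0 + \<delta>"] \<open>\<delta> > 0\<close> by auto
  obtain t where t: "t \<in> insert T (\<rat> \<inter> {0..T})" "t0 \<le> t" "t < t0 + \<delta>"
  proof (cases "t0 = T")
    case True thus ?thesis using that[of T] \<open>\<delta> > 0\<close> by simp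
  next
    case False
    hence "t0 < min T (t0 + \<delta>)" using t0 \<open>\<delta> > 0\<close> by auto
    then obtain r where "r \<in> \<rat>" "t0 < r" "r < min T (t0 + \<delta>)"
      using Rats_dense_in_real by blast
    thus ?thesis using that[of r] t0 by simp
  qed
  have "F \<subseteq> counted_arrivals n v gs t (interval_I \<kappa> x)"
  proof
    fix i assume "i \<in> F"
    thus "i \<in> counted_arrivals n v gs t (interval_I \<kappa> x)"
      using d(2)[OF \<open>i \<in> F\<close> t(2) _ _] t(3) x \<delta>_le[OF \<open>i \<in> F\<close>] by force
  qed
  hence "card F \<le> card (counted_arrivals n v gs t (interval_I \<kappa> x))"
    by (intro card_mono finite_counted_arrivals)
  moreover have "x \<in> \<rat> \<inter> {0..}" using x x0 by simp
  ultimately show ?thesis using t(1) that by (simp add: F_def)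
qed

lemma card_le_iff_initial_segments:
  assumes "finite (S::nat set)"
  shows "real (card S) \<le> c \<longleftrightarrow> (\<forall>m. real (card ({..<m} \<inter> S)) \<le> c)"
proof
  assume "real (card S) \<le> c"
  moreover have "card ({..<m} \<inter> S) \<le> card S" for m by (intro card_mono assms) auto
  ultimately show "\<forall>m. real (card ({..<m} \<inter> S)) \<le> c" using of_nat_le_iff order_trans by blast
next
  assume "\<forall>m. real (card ({..<m} \<inter> S)) \<le> c"
  moreover obtain k where "S \<subseteq> {..<k}" using assms finite_nat_iff_bounded by blast
  ultimately show "real (card S) \<le> c" by (metis Int_absorb1)
qed

lemma measurable_card_counted_arrivals_le:
  assumes [measurable]: "\<And>i. V i \<in> borel_measurable M" "\<And>i. W i \<in> borel_measurable M"
    and nonneg: "\<And>i \<omega>. \<omega> \<in> space M \<Longrightarrow> V i \<omega> \<ge> 0"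
  shows "{\<omega>\<in>space M. real (card (counted_arrivals n (\<lambda>i. V i \<omega>) (\<lambda>i. W i \<omega>) t (interval_I \<kappa> x))) \<le> c}
    \<in> sets M"
proof -
  define Q where "Q i \<omega> \<longleftrightarrow> (\<Sum>j\<le>i. V j \<omega>) \<le> real n * t \<and> (\<exists>m::nat. real n * t < (\<Sum>j<m. V j \<omega>)) \<and>
      max 0 (W i \<omega> - max 0 (t - (\<Sum>j\<le>i. V j \<omega>) / real n)) > 0 \<and>
      max 0 (x - \<kappa>) < max 0 (W i \<omega> - max 0 (t - (\<Sum>j\<le>i. V j \<omega>) / real n)) \<and>
      max 0 (W i \<omega> - max 0 (t - (\<Sum>j\<le>i. V j \<omega>) / real n)) < x + \<kappa>" for i \<omega>
  have [measurable]: "Measurable.pred M (Q i)" for i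
    unfolding Q_def by measurable
  have Q: "counted_arrivals n (\<lambda>i. V i \<omega>) (\<lambda>i. W i \<omega>) t (interval_I \<kappa> x) = {i. Q i \<omega>}"
    if "\<omega> \<in> space M" for \<omega>
    unfolding counted_arrivals_def Q_def renewal_count_gt_iff[OF nonneg[OF that]] residual_def
      interval_I_def by auto
  have "real (card ({..<m} \<inter> {i. Q i \<omega>})) = (\<Sum>i<m. of_bool (Q i \<omega>))" for m \<omega>
    by simp
  hence "{\<omega>\<in>space M. real (card (counted_arrivals n (\<lambda>i. V i \<omega>) (\<lambda>i. W i \<omega>) t (interval_I \<kappa> x))) \<le> c}
      = {\<omega>\<in>space M. \<forall>m. (\<Sum>i<m. of_bool (Q i \<omega>)) \<le> c}"
    using card_le_iff_initial_segments[OF finite_counted_arrivals] Q by (intro Collect_cong) auto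
  also have "\<dots> \<in> sets M" by measurable
  finally show ?thesis .
qed

lemma sets_Rbar_uniformly_le:
  assumes [measurable]: "\<And>i. V i \<in> borel_measurable M" "\<And>i. W i \<in> borel_measurable M"
    and nonneg: "\<And>i \<omega>. \<omega> \<in> space M \<Longrightarrow> V i \<omega> \<ge> 0"
    and n: "n \<ge> 1" and T: "T \<ge> 0"
  shows "{\<omega>\<in>space M. \<forall>t\<in>{0..T}. \<forall>x\<ge>0. Rbar n (\<lambda>i. V i \<omega>) (\<lambda>i. W i \<omega>) t (interval_I \<kappa> x) \<le> \<epsilon>}
    \<in> sets M"
proof -
  let ?C = "\<lambda>\<omega> t x. real (card (counted_arrivals n (\<lambda>i. V i \<omega>) (\<lambda>i. W i \<omega>) t (interval_I \<kappa> x)))"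
  have Rbar_le: "Rbar n (\<lambda>i. V i \<omega>) (\<lambda>i. W i \<omega>) t (interval_I \<kappa> x) \<le> \<epsilon> \<longleftrightarrow> ?C \<omega> t x \<le> \<epsilon> * real n"
    for \<omega> t x using n by (simp add: Rbar_eq_card_counted_arrivals divide_le_eq)
  define Q where "Q = insert T (\<rat> \<inter> {0..T}) \<times> (\<rat> \<inter> {0::real..})"
  have "countable Q" unfolding Q_def
    by (intro countable_SIGMA countable_insert) (auto intro: countable_Int1 countable_rat)
  have "(\<forall>t\<in>{0..T}. \<forall>x\<ge>0. ?C \<omega> t x \<le> \<epsilon> * real n) \<longleftrightarrow> (\<forall>(t, x)\<in>Q. ?C \<omega> t x \<le> \<epsilon> * real n)"
    if "\<omega> \<in> space M" for \<omega>
  proof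
    assume Q_bound: "\<forall>(t, x)\<in>Q. ?C \<omega> t x \<le> \<epsilon> * real n"
    show "\<forall>t\<in>{0..T}. \<forall>x\<ge>0. ?C \<omega> t x \<le> \<epsilon> * real n"
    proof (intro ballI allI impI)
      fix t0 x0 :: real assume t0: "t0 \<in> {0..T}" and x0: "x0 \<ge> 0"
      have "\<And>j. V j \<omega> \<ge> 0" using nonneg that by blast
      then obtain t x where "t \<in> insert T (\<rat> \<inter> {0..T})" "x \<in> \<rat> \<inter> {0..}"
        and card_le: "card (counted_arrivals n (\<lambda>i. V i \<omega>) (\<lambda>i. W i \<omega>) t0 (interval_I \<kappa> x0))
          \<le> card (counted_arrivals n (\<lambda>i. V i \<omega>) (\<lambda>i. W i \<omega>) t (interval_I \<kappa> x))"
        by (rule counted_arrivals_rational_dominated[OF _ n t0 x0])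
      hence "(t, x) \<in> Q" by (simp add: Q_def)
      hence "?C \<omega> t x \<le> \<epsilon> * real n" using Q_bound by auto
      moreover have "?C \<omega> t0 x0 \<le> ?C \<omega> t x" using card_le by simp
      ultimately show "?C \<omega> t0 x0 \<le> \<epsilon> * real n" by linarith
    qed
  qed (use T in \<open>auto simp: Q_def\<close>)
  hence "{\<omega>\<in>space M. \<forall>t\<in>{0..T}. \<forall>x\<ge>0. Rbar n (\<lambda>i. V i \<omega>) (\<lambda>i. W i \<omega>) t (interval_I \<kappa> x) \<le> \<epsilon>}
     = {\<omega>\<in>space M. \<forall>p\<in>Q. ?C \<omega> (fst p) (snd p) \<le> \<epsilon> * real n}"
    unfolding Rbar_le by (auto simp: case_prod_beta)
  also have "\<dots> \<in> sets M"
    using measurable_card_counted_arrivals_le[OF assms(1,2) nonneg] \<open>countable Q\<close>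
    by (intro sets.sets_Collect_countable_All') auto
  finally show ?thesis .
qed

context prob_space
begin

lemma indep_sets_reindex:
  assumes indep: "indep_sets F (f ` I)" and inj: "inj_on f I"
  shows "indep_sets (\<lambda>i. F (f i)) I"
  unfolding indep_sets_def
proof (intro conjI ballI allI impI)
  show "F (f i) \<subseteq> events" if "i \<in> I" for i
    using indep that unfolding indep_sets_def by blast
next
  fix J A assume J: "J \<subseteq> I" "J \<noteq> {}" "finite J" and A: "A \<in> Pi J (\<lambda>i. F (f i))"
  have inj_J: "inj_on f J" using inj J(1) by (rule inj_on_subset)
  define A' where "A' y = A (the_inv_into J f y)" for y
  have A'_f: "A' (f j) = A j" if "j \<in> J" for j
    using inj_J that by (simp add: A'_def the_inv_into_f_f)
  have "A' \<in> Pi (f ` J) F" using A A'_f by auto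
  moreover have "f ` J \<subseteq> f ` I" "f ` J \<noteq> {}" "finite (f ` J)" using J by auto
  ultimately have "prob (\<Inter>y\<in>f ` J. A' y) = (\<Prod>y\<in>f ` J. prob (A' y))"
    using indep unfolding indep_sets_def by blast
  thus "prob (\<Inter>j\<in>J. A j) = (\<Prod>j\<in>J. prob (A j))"
    using A'_f by (simp add: prod.reindex[OF inj_J] image_image cong: INF_cong prod.cong)
qed

lemma indep_vars_reindex:
  assumes "indep_vars M' X (f ` I)" and "inj_on f I"
  shows "indep_vars (\<lambda>i. M' (f i)) (\<lambda>i. X (f i)) I"
  using assms indep_sets_reindex[where F="\<lambda>i. sigma_sets (space M) {X i -` A \<inter> space M |A. A \<in> sets (M' i)}"]
  unfolding indep_vars_def by auto

lemma indep_vars_row: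
  assumes "indep_vars (\<lambda>_. borel) (\<lambda>(k, i). X k i) (A \<times> UNIV)" and "k \<in> A"
  shows "indep_vars (\<lambda>_. borel) (X k) UNIV"
proof -
  have "indep_vars (\<lambda>_. borel) (\<lambda>(k, i). X k i) (Pair k ` UNIV)"
    using \<open>k \<in> A\<close> by (intro indep_vars_subset[OF assms(1)]) auto
  from indep_vars_reindex[OF this] show ?thesis by (simp add: inj_on_def)
qed

lemma prob_all_ge:
  assumes "finite I" and A: "\<And>i. i \<in> I \<Longrightarrow> A i \<in> events"
    and bound: "\<And>i. i \<in> I \<Longrightarrow> 1 - \<delta> \<le> prob (A i)"
  shows "1 - real (card I) * \<delta> \<le> prob {\<omega>\<in>space M. \<forall>i\<in>I. \<omega> \<in> A i}"
proof -
  have "prob (\<Union>i\<in>I. space M - A i) \<le> (\<Sum>i\<in>I. prob (space M - A i))"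
    using A by (intro finite_measure_subadditive_finite \<open>finite I\<close>) auto
  also have "\<dots> = (\<Sum>i\<in>I. 1 - prob (A i))" using A by (intro sum.cong refl prob_compl) auto
  also have "\<dots> \<le> (\<Sum>i\<in>I. \<delta>)" using bound by (intro sum_mono) (simp add: algebra_simps)
  finally have "prob (\<Union>i\<in>I. space M - A i) \<le> real (card I) * \<delta>" by simp
  moreover have "{\<omega>\<in>space M. \<forall>i\<in>I. \<omega> \<in> A i} = space M - (\<Union>i\<in>I. space M - A i)" by auto
  moreover have "(\<Union>i\<in>I. space M - A i) \<in> events" using A \<open>finite I\<close> by (intro sets.finite_UN) auto
  ultimately show ?thesis by (simp add: prob_compl)
qed

lemma liminf_prob_all_ge:
  fixes A :: "real \<Rightarrow> nat \<Rightarrow> 'i \<Rightarrow> 'a set"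
  assumes "finite I"
    and sets: "\<And>\<kappa> n i. n \<ge> 1 \<Longrightarrow> i \<in> I \<Longrightarrow> A \<kappa> n i \<in> events"
    and small: "\<And>i. i \<in> I \<Longrightarrow> \<exists>\<kappa>0>0. \<forall>\<kappa>. 0 < \<kappa> \<longrightarrow> \<kappa> \<le> \<kappa>0 \<longrightarrow>
      (\<forall>\<^sub>F n in sequentially. 1 - \<delta> \<le> prob (A \<kappa> n i))"
    and "real (card I) * \<delta> \<le> \<eta>"
  shows "\<exists>\<kappa>>0. ereal (1 - \<eta>) \<le> liminf (\<lambda>n. ereal (prob {\<omega>\<in>space M. \<forall>i\<in>I. \<omega> \<in> A \<kappa> n i}))"
proof -
  define P where "P i \<kappa>0 \<longleftrightarrow> \<kappa>0 > 0 \<and> (\<forall>\<kappa>. 0 < \<kappa> \<longrightarrow> \<kappa> \<le> \<kappa>0 \<longrightarrow>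
      (\<forall>\<^sub>F n in sequentially. 1 - \<delta> \<le> prob (A \<kappa> n i)))" for i \<kappa>0
  have "\<forall>i\<in>I. \<exists>\<kappa>0. P i \<kappa>0" using small unfolding P_def by blast
  then obtain \<kappa>0 where \<kappa>0: "\<And>i. i \<in> I \<Longrightarrow> P i (\<kappa>0 i)" by (metis bchoice)
  define \<kappa> where "\<kappa> = Min (insert 1 (\<kappa>0 ` I))"
  have "\<kappa> > 0" using \<kappa>0 \<open>finite I\<close> by (auto simp: \<kappa>_def Min_gr_iff P_def)
  moreover have "\<kappa> \<le> \<kappa>0 i" if "i \<in> I" for i using that \<open>finite I\<close> by (simp add: \<kappa>_def)
  ultimately have "\<forall>\<^sub>F n in sequentially. 1 - \<delta> \<le> prob (A \<kappa> n i)" if "i \<in> I" for i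
    using \<kappa>0[OF that] that unfolding P_def by blast
  hence "\<forall>\<^sub>F n in sequentially. (\<forall>i\<in>I. 1 - \<delta> \<le> prob (A \<kappa> n i)) \<and> n \<ge> 1"
    using \<open>finite I\<close> by (intro eventually_conj eventually_ball_finite eventually_ge_at_top) auto
  hence "\<forall>\<^sub>F n in sequentially. ereal (1 - \<eta>) \<le> ereal (prob {\<omega>\<in>space M. \<forall>i\<in>I. \<omega> \<in> A \<kappa> n i})"
  proof (rule eventually_mono)
    fix n assume "(\<forall>i\<in>I. 1 - \<delta> \<le> prob (A \<kappa> n i)) \<and> n \<ge> 1"
    hence "1 - real (card I) * \<delta> \<le> prob {\<omega>\<in>space M. \<forall>i\<in>I. \<omega> \<in> A \<kappa> n i}"
      using sets by (intro prob_all_ge[OF \<open>finite I\<close>]) auto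
    thus "ereal (1 - \<eta>) \<le> ereal (prob {\<omega>\<in>space M. \<forall>i\<in>I. \<omega> \<in> A \<kappa> n i})"
      using \<open>real (card I) * \<delta> \<le> \<eta>\<close> by simp
  qed
  hence "ereal (1 - \<eta>) \<le> liminf (\<lambda>n. ereal (prob {\<omega>\<in>space M. \<forall>i\<in>I. \<omega> \<in> A \<kappa> n i}))"
    by (rule Liminf_bounded)
  thus ?thesis using \<open>\<kappa> > 0\<close> by blast
qed

lemma Hoeffding_iid_compose:
  fixes X :: "'i \<Rightarrow> 'a \<Rightarrow> real" and f :: "real \<Rightarrow> real" and a b e :: real
  assumes indep: "indep_vars (\<lambda>_. borel) X I" and fin: "finite I" and k: "k \<in> I"
    and ident: "\<And>i. i \<in> I \<Longrightarrow> distr M borel (X i) = distr M borel (X k)"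
    and f[measurable]: "f \<in> borel_measurable borel" and f_bounds: "\<And>y. a \<le> f y \<and> f y \<le> b"
    and "a < b" and "e \<ge> 0"
  shows "prob {\<omega>\<in>space M. expectation (\<lambda>\<omega>. f (X k \<omega>)) + e \<le> (\<Sum>i\<in>I. f (X i \<omega>)) / real (card I)}
           \<le> exp (-2 * real (card I) * e\<^sup>2 / (b - a)\<^sup>2)"
    and "prob {\<omega>\<in>space M. (\<Sum>i\<in>I. f (X i \<omega>)) / real (card I) \<le> expectation (\<lambda>\<omega>. f (X k \<omega>)) - e}
           \<le> exp (-2 * real (card I) * e\<^sup>2 / (b - a)\<^sup>2)"
proof -
  have X[measurable]: "random_variable borel (X i)" if "i \<in> I" for i
    using indep that by (auto simp: indep_vars_def)
  note X[OF k, measurable]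
  have ident_f: "distr M borel (\<lambda>\<omega>. f (X i \<omega>)) = distr M borel (\<lambda>\<omega>. f (X k \<omega>))" if "i \<in> I" for i
  proof -
    have "distr M borel (\<lambda>\<omega>. f (X i \<omega>)) = distr (distr M borel (X i)) borel f"
      using X[OF that] by (subst distr_distr) (auto simp: comp_def)
    also have "\<dots> = distr (distr M borel (X k)) borel f" using ident[OF that] by simp
    also have "\<dots> = distr M borel (\<lambda>\<omega>. f (X k \<omega>))" by (subst distr_distr) (auto simp: comp_def)
    finally show ?thesis .
  qed
  interpret Hoeffding_ineq_iid M I "\<lambda>i \<omega>. f (X i \<omega>)" "\<lambda>\<omega>. f (X k \<omega>)" a b
    "expectation (\<lambda>\<omega>. f (X k \<omega>))"
  proof unfold_locales
    show "indep_vars (\<lambda>_. borel) (\<lambda>i \<omega>. f (X i \<omega>)) I"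
      by (rule indep_vars_compose2[OF indep]) simp
  qed (use fin ident_f f_bounds in simp_all)
  have "I \<noteq> {}" using k by blast
  thus "prob {\<omega>\<in>space M. expectation (\<lambda>\<omega>. f (X k \<omega>)) + e \<le> (\<Sum>i\<in>I. f (X i \<omega>)) / real (card I)}
           \<le> exp (-2 * real (card I) * e\<^sup>2 / (b - a)\<^sup>2)"
    and "prob {\<omega>\<in>space M. (\<Sum>i\<in>I. f (X i \<omega>)) / real (card I) \<le> expectation (\<lambda>\<omega>. f (X k \<omega>)) - e}
           \<le> exp (-2 * real (card I) * e\<^sup>2 / (b - a)\<^sup>2)"
    using Hoeffding_ineq_ge'[of e] Hoeffding_ineq_le'[of e] \<open>e \<ge> 0\<close> \<open>a < b\<close> by simp_all
qed

lemma prob_frequency_ge: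
  fixes X :: "'i \<Rightarrow> 'a \<Rightarrow> real"
  assumes indep: "indep_vars (\<lambda>_. borel) X I" and "finite I" "I \<noteq> {}"
    and distr: "\<And>i. i \<in> I \<Longrightarrow> distr M borel (X i) = D"
    and S[measurable]: "S \<in> sets borel" and "\<theta> \<ge> 0"
  shows "prob {\<omega>\<in>space M. measure D S + \<theta> \<le> (\<Sum>i\<in>I. indicator S (X i \<omega>)) / real (card I)}
    \<le> exp (-2 * real (card I) * \<theta>\<^sup>2)"
proof -
  obtain i0 where i0: "i0 \<in> I" using \<open>I \<noteq> {}\<close> by blast
  have [measurable]: "random_variable borel (X i0)" using indep i0 by (auto simp: indep_vars_def)
  have "expectation (\<lambda>\<omega>. indicator S (X i0 \<omega>)) = measure (distr M borel (X i0)) S"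
    using integral_distr[of "X i0" M borel "indicator S :: real \<Rightarrow> real"] by simp
  also have "\<dots> = measure D S" using distr[OF i0] by simp
  finally show ?thesis
    using Hoeffding_iid_compose(1)[OF indep \<open>finite I\<close> i0 _ _ _ _ \<open>\<theta> \<ge> 0\<close>, of "indicator S" 0 1]
      distr i0 by (simp add: indicator_def)
qed

lemma prob_block_overloaded:
  fixes W :: "nat \<Rightarrow> 'a \<Rightarrow> real" and S :: "nat \<Rightarrow> real set"
  assumes indep: "indep_vars (\<lambda>_. borel) W UNIV" and distr: "\<And>i. distr M borel (W i) = D"
    and S[measurable]: "\<And>j. S j \<in> sets borel" and "b \<ge> 1" "\<theta> \<ge> 0"
  shows "prob {\<omega>\<in>space M. \<exists>l<L. \<exists>j\<le>J.
      measure D (S j) + \<theta> \<le> (\<Sum>i\<in>{l*b..<Suc l*b}. indicator (S j) (W i \<omega>)) / real b}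
    \<le> real (L*(J+1)) * exp (-2 * real b * \<theta>\<^sup>2)"
proof -
  have [measurable]: "W i \<in> borel_measurable M" for i using indep by (auto simp: indep_vars_def)
  define A where "A = (\<lambda>(l, j). {\<omega>\<in>space M.
    measure D (S j) + \<theta> \<le> (\<Sum>i\<in>{l*b..<Suc l*b}. indicator (S j) (W i \<omega>)) / real b})"
  have A_sets: "A p \<in> events" for p unfolding A_def by (cases p) simp
  have "prob (A (l, j)) \<le> exp (-2 * real b * \<theta>\<^sup>2)" for l j
    using prob_frequency_ge[OF indep_vars_subset[OF indep] _ _ _ S \<open>\<theta> \<ge> 0\<close>, of "{l*b..<Suc l*b}"]
      distr \<open>b \<ge> 1\<close> by (simp add: A_def)
  hence "prob (\<Union>p\<in>{..<L} \<times> {..J}. A p) \<le> (\<Sum>p\<in>{..<L} \<times> {..J}. exp (-2 * real b * \<theta>\<^sup>2))"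
    using A_sets by (intro order_trans[OF finite_measure_subadditive_finite sum_mono]) auto
  moreover have "(\<Union>p\<in>{..<L} \<times> {..J}. A p) = {\<omega>\<in>space M. \<exists>l<L. \<exists>j\<le>J.
      measure D (S j) + \<theta> \<le> (\<Sum>i\<in>{l*b..<Suc l*b}. indicator (S j) (W i \<omega>)) / real b}"
    by (auto simp: A_def)
  ultimately show ?thesis by simp
qed

lemma prob_truncated_sum_le:
  fixes V :: "nat \<Rightarrow> 'a \<Rightarrow> real" and B :: real
  defines "\<mu>B \<equiv> expectation (\<lambda>\<omega>. max 0 (min (V 0 \<omega>) B))"
  assumes indep: "indep_vars (\<lambda>_. borel) V UNIV"
    and ident: "\<And>i. distr M borel (V i) = distr M borel (V 0)" and "N > 0" "B > 0"
  shows "prob {\<omega>\<in>space M. (\<Sum>i<N. max 0 (min (V i \<omega>) B)) \<le> real N * (\<mu>B / 2)}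
    \<le> exp (-2 * real N * (\<mu>B / 2)\<^sup>2 / B\<^sup>2)"
proof -
  define f where "f y = max 0 (min y B)" for y :: real
  have [measurable]: "f \<in> borel_measurable borel" unfolding f_def by measurable
  have "\<mu>B \<ge> 0" unfolding \<mu>B_def by (intro integral_nonneg_AE) auto
  hence "\<mu>B / 2 \<ge> 0" by simp
  have "prob {\<omega>\<in>space M. (\<Sum>i<N. f (V i \<omega>)) / real (card {..<N}) \<le> \<mu>B - \<mu>B / 2}
      \<le> exp (-2 * real (card {..<N}) * (\<mu>B / 2)\<^sup>2 / (B - 0)\<^sup>2)"
    using Hoeffding_iid_compose(2)[where X=V and I="{..<N}" and k=0 and f=f and a=0 and b=B and e="\<mu>B / 2"]
      indep_vars_subset[OF indep] ident \<open>N > 0\<close> \<open>B > 0\<close> \<open>\<mu>B / 2 \<ge> 0\<close> by (simp add: f_def \<mu>B_def)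
  moreover have "(\<Sum>i<N. f (V i \<omega>)) / real N \<le> \<mu>B / 2 \<longleftrightarrow> (\<Sum>i<N. f (V i \<omega>)) \<le> real N * (\<mu>B / 2)" for \<omega>
    using \<open>N > 0\<close> by (simp add: divide_le_eq mult.commute)
  ultimately show ?thesis by (simp add: f_def)
qed

lemma prob_sum_excess_ge:
  fixes V :: "nat \<Rightarrow> 'a \<Rightarrow> real"
  assumes V[measurable]: "\<And>i. V i \<in> borel_measurable M"
    and ident: "\<And>i. distr M borel (V i) = distr M borel (V 0)"
    and int: "integrable M (V 0)" and "c > 0"
  shows "prob {\<omega>\<in>space M. c \<le> (\<Sum>j<N. max 0 (V j \<omega> - B))}
    \<le> real N * expectation (\<lambda>\<omega>. max 0 (V 0 \<omega> - B)) / c"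
proof -
  define e where "e y = max 0 (y - B)" for y :: real
  have [measurable]: "e \<in> borel_measurable borel" unfolding e_def by measurable
  have e_nonneg: "e y \<ge> 0" for y by (simp add: e_def)
  have "integrable M (\<lambda>\<omega>. e (V 0 \<omega>))" using int by (auto simp: e_def)
  hence int_j: "integrable M (\<lambda>\<omega>. e (V j \<omega>))" for j
    using integrable_distr_eq[of "V j" M borel e] integrable_distr_eq[of "V 0" M borel e] ident[of j]
    by simp
  have exp_j: "expectation (\<lambda>\<omega>. e (V j \<omega>)) = expectation (\<lambda>\<omega>. e (V 0 \<omega>))" for j
    using integral_distr[of "V j" M borel e] integral_distr[of "V 0" M borel e] ident[of j] by simp
  have "prob {\<omega>\<in>space M. c \<le> (\<Sum>j<N. e (V j \<omega>))} \<le> expectation (\<lambda>\<omega>. \<Sum>j<N. e (V j \<omega>)) / c"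
    by (rule integral_Markov_inequality_measure[OF _ _ _ \<open>c > 0\<close>])
      (use e_nonneg in \<open>auto intro!: int_j AE_I2 sum_nonneg\<close>)
  also have "expectation (\<lambda>\<omega>. \<Sum>j<N. e (V j \<omega>)) = (\<Sum>j<N. expectation (\<lambda>\<omega>. e (V j \<omega>)))"
    by (rule Bochner_Integration.integral_sum) (rule int_j)
  also have "\<dots> = (\<Sum>j<N. expectation (\<lambda>\<omega>. e (V 0 \<omega>)))" by (rule sum.cong[OF refl exp_j])
  finally show ?thesis by (simp add: e_def)
qed

lemma truncation_level_exists:
  assumes [measurable]: "V \<in> borel_measurable M" and int: "integrable M V"
    and nonneg: "\<And>\<omega>. \<omega> \<in> space M \<Longrightarrow> V \<omega> \<ge> 0" and "\<delta> > 0"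
  obtains B :: real where "B > 0" "expectation (\<lambda>\<omega>. max 0 (V \<omega> - B)) < \<delta>"
    "expectation (\<lambda>\<omega>. max 0 (min (V \<omega>) B)) = expectation V - expectation (\<lambda>\<omega>. max 0 (V \<omega> - B))"
proof -
  have "(\<lambda>B::nat. expectation (\<lambda>\<omega>. max 0 (V \<omega> - real B))) \<longlonglongrightarrow> expectation (\<lambda>\<omega>. 0::real)"
  proof (rule integral_dominated_convergence[where w="\<lambda>\<omega>. \<bar>V \<omega>\<bar>"])
    show "integrable M (\<lambda>\<omega>. \<bar>V \<omega>\<bar>)" using int by simp
    show "AE \<omega> in M. (\<lambda>B. max 0 (V \<omega> - real B)) \<longlonglongrightarrow> 0"
    proof (rule AE_I2)
      fix \<omega>
      obtain N :: nat where "V \<omega> \<le> real N" using real_arch_simple by blast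
      hence "\<forall>\<^sub>F B in sequentially. max 0 (V \<omega> - real B) = 0"
        by (intro eventually_sequentiallyI[of N]) auto
      thus "(\<lambda>B. max 0 (V \<omega> - real B)) \<longlonglongrightarrow> 0" by (rule tendsto_eventually)
    qed
    show "\<And>B. AE \<omega> in M. norm (max 0 (V \<omega> - real B)) \<le> \<bar>V \<omega>\<bar>" by auto
  qed auto
  hence "\<forall>\<^sub>F B in sequentially. expectation (\<lambda>\<omega>. max 0 (V \<omega> - real B)) < \<delta>"
    using \<open>\<delta> > 0\<close> by (intro order_tendstoD(2)) auto
  moreover have "\<forall>\<^sub>F B in sequentially. (1::nat) \<le> B" by (rule eventually_ge_at_top)
  ultimately obtain B :: nat where B: "expectation (\<lambda>\<omega>. max 0 (V \<omega> - real B)) < \<delta>" "1 \<le> B"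
    using eventually_happens'[OF sequentially_bot] eventually_conj by blast
  have "expectation (\<lambda>\<omega>. max 0 (min (V \<omega>) (real B))) + expectation (\<lambda>\<omega>. max 0 (V \<omega> - real B))
      = expectation (\<lambda>\<omega>. max 0 (min (V \<omega>) (real B)) + max 0 (V \<omega> - real B))"
    by (rule Bochner_Integration.integral_add[symmetric])
      (intro integrable_max integrable_min integrable_const Bochner_Integration.integrable_diff int)+
  also have "\<dots> = expectation V"
  proof (rule Bochner_Integration.integral_cong[OF refl])
    fix \<omega> assume "\<omega> \<in> space M"
    thus "max 0 (min (V \<omega>) (real B)) + max 0 (V \<omega> - real B) = V \<omega>" using nonneg[of \<omega>] by simp
  qed
  finally show ?thesis using that[of "real B"] B by simp
qed

end

section \<open>Atomless limits and grid cells\<close>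

lemma real_distribution_measure_greaterThan:
  assumes "real_distribution H"
  shows "measure H {a<..} = 1 - cdf H a"
proof -
  interpret H: real_distribution H by (rule assms)
  have "{a<..} = UNIV - {..a}" by auto
  thus ?thesis by (simp add: cdf_def H.prob_compl[symmetric] H.space_eq_univ)
qed

lemma real_distribution_small_intervals:
  assumes G: "real_distribution G" and atomless: "\<And>x. measure G {x} = 0" and "\<theta> > 0"
  obtains h0 M0 where "h0 > 0" "measure G {M0<..} < \<theta>"
    "\<And>c h. 0 \<le> c \<Longrightarrow> 0 < h \<Longrightarrow> h \<le> h0 \<Longrightarrow> measure G {c<..c+2*h} < \<theta>"
proof -
  interpret G: real_distribution G by (rule G)
  note tail = real_distribution_measure_greaterThan[OF G]
  have "\<forall>\<^sub>F x in at_top. 1 - \<theta> < cdf G x"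
    using G.cdf_lim_at_top_prob \<open>\<theta> > 0\<close> by (intro order_tendstoD(1)) auto
  then obtain M0 where M0: "0 \<le> M0" "measure G {M0<..} < \<theta>"
    unfolding tail eventually_at_top_linorder by (metis linorder_linear max.cobounded1 max.cobounded2 diff_less_eq add.commute)
  have "continuous_on {0..M0+1} (cdf G)"
    using G.isCont_cdf atomless by (intro continuous_at_imp_continuous_on) auto
  hence "uniformly_continuous_on {0..M0+1} (cdf G)"
    by (intro compact_uniformly_continuous) auto
  then obtain d where d: "d > 0" "\<And>x x'. x \<in> {0..M0+1} \<Longrightarrow> x' \<in> {0..M0+1} \<Longrightarrow> dist x' x < d \<Longrightarrow>
      dist (cdf G x') (cdf G x) < \<theta>"
    unfolding uniformly_continuous_on_def using \<open>\<theta> > 0\<close> by metis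
  have "measure G {c<..c+2*h} < \<theta>" if "0 \<le> c" "0 < h" "h \<le> min (1/2) (d/4)" for c h
  proof (cases "c \<le> M0")
    case True
    have "measure G {c<..c+2*h} = cdf G (c+2*h) - cdf G c"
      using that by (subst G.cdf_diff_eq) auto
    also have "\<dots> \<le> dist (cdf G (c+2*h)) (cdf G c)" by (simp add: dist_real_def)
    also have "\<dots> < \<theta>" using True that d by (intro d(2)) (auto simp: dist_real_def)
    finally show ?thesis .
  next
    case False
    hence "measure G {c<..c+2*h} \<le> measure G {M0<..}" by (intro G.finite_measure_mono) auto
    thus ?thesis using M0 by simp
  qed
  thus ?thesis using that[of "min (1/2) (d/4)" M0] M0 d by simp
qed

lemma grid_cell_measure_less:
  assumes G: "real_distribution G" and tail: "measure G {M0<..} < \<theta>"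
    and small: "\<And>c. 0 \<le> c \<Longrightarrow> measure G {c<..c+2*h} < \<theta>"
    and "h > 0" and J: "M0 \<le> real J * h" and "j \<le> J"
  shows "measure G (grid_cell h J j) < \<theta>"
proof (cases "j < J")
  case True
  thus ?thesis using small[of "real j * h"] \<open>h > 0\<close> by (simp add: grid_cell_def algebra_simps)
next
  case False
  interpret G: real_distribution G by (rule G)
  have "measure G (grid_cell h J j) \<le> measure G {M0<..}"
    using False J by (intro G.finite_measure_mono) (auto simp: grid_cell_def)
  thus ?thesis using tail by simp
qed

lemma weak_conv_tendsto_measure_intervals:
  assumes Gn: "\<And>n. n \<ge> 1 \<Longrightarrow> real_distribution (Gn n)" and G: "real_distribution G"
    and atomless: "\<And>x. measure G {x} = 0" and conv: "weak_conv_m Gn G"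
  shows "a < b \<Longrightarrow> (\<lambda>n. measure (Gn n) {a<..b}) \<longlonglongrightarrow> measure G {a<..b}"
    and "(\<lambda>n. measure (Gn n) {a<..}) \<longlonglongrightarrow> measure G {a<..}"
proof -
  have interval: "measure H {a<..b} = cdf H b - cdf H a" if "real_distribution H" "a < b" for H a b
  proof -
    interpret H: real_distribution H by (rule that)
    show ?thesis using H.cdf_diff_eq[OF \<open>a < b\<close>] by simp
  qed
  interpret G: real_distribution G by (rule G)
  have cdf: "(\<lambda>n. cdf (Gn n) x) \<longlonglongrightarrow> cdf G x" for x
    using conv G.isCont_cdf atomless unfolding weak_conv_m_def weak_conv_def by blast
  have ev: "\<forall>\<^sub>F n in sequentially. real_distribution (Gn n)"
    using eventually_ge_at_top[of 1] by eventually_elim (rule Gn)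
  show "(\<lambda>n. measure (Gn n) {a<..b}) \<longlonglongrightarrow> measure G {a<..b}" if "a < b"
  proof (rule Lim_transform_eventually)
    show "(\<lambda>n. cdf (Gn n) b - cdf (Gn n) a) \<longlonglongrightarrow> measure G {a<..b}"
      using interval[OF G that] by (simp add: tendsto_diff cdf)
    show "\<forall>\<^sub>F n in sequentially. cdf (Gn n) b - cdf (Gn n) a = measure (Gn n) {a<..b}"
      using ev by eventually_elim (simp add: interval that)
  qed
  show "(\<lambda>n. measure (Gn n) {a<..}) \<longlonglongrightarrow> measure G {a<..}"
  proof (rule Lim_transform_eventually)
    show "(\<lambda>n. 1 - cdf (Gn n) a) \<longlonglongrightarrow> measure G {a<..}"
      using real_distribution_measure_greaterThan[OF G] by (simp add: tendsto_diff cdf)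
    show "\<forall>\<^sub>F n in sequentially. 1 - cdf (Gn n) a = measure (Gn n) {a<..}"
      using ev by eventually_elim (simp add: real_distribution_measure_greaterThan)
  qed
qed

section \<open>The estimate for a single class\<close>

lemma eventually_exp_div_le:
  assumes "q \<ge> (1::nat)" "c > 0" "d > 0"
  shows "\<forall>\<^sub>F n in sequentially. exp (- c * real (n div q)) \<le> d"
proof (rule eventually_sequentiallyI[of "q * nat \<lceil>- ln d / c\<rceil>"])
  fix n assume n: "q * nat \<lceil>- ln d / c\<rceil> \<le> n"
  have "nat \<lceil>- ln d / c\<rceil> \<le> n div q"
    using div_le_mono[OF n, of q] \<open>q \<ge> 1\<close> by simp
  hence "- ln d / c \<le> real (n div q)" by linarith
  hence "- ln d \<le> real (n div q) * c" by (subst (asm) pos_divide_le_eq[OF \<open>c > 0\<close>])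
  hence "- c * real (n div q) \<le> ln d" by (simp add: mult.commute)
  thus "exp (- c * real (n div q)) \<le> d" using \<open>d > 0\<close> by (metis exp_le_cancel_iff exp_ln)
qed

lemma block_count_bounds:
  fixes q n :: nat and T \<mu> \<mu>B :: real
  assumes "\<mu> > 0" "T > 0" "\<mu> \<le> 2 * \<mu>B" "q \<ge> 1" "q \<le> n"
  defines "L \<equiv> nat \<lceil>8 * real q * T / \<mu>\<rceil>"
  shows "L \<ge> 1" "n div q \<ge> 1" "2 * real n * T < real (L * (n div q)) * \<mu>B"
    "real (L * (n div q)) \<le> (8 * T / \<mu> + 1) * real n"
proof -
  define b where "b = n div q"
  have L_lo: "8 * real q * T / \<mu> \<le> real L" unfolding L_def by linarith
  have pos: "0 < 8 * real q * T / \<mu>" using \<open>\<mu> > 0\<close> \<open>T > 0\<close> \<open>q \<ge> 1\<close> by simp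
  hence "0 \<le> \<lceil>8 * real q * T / \<mu>\<rceil>" by (metis ceiling_mono ceiling_zero less_imp_le)
  hence "real L = of_int \<lceil>8 * real q * T / \<mu>\<rceil>" unfolding L_def by (rule of_nat_nat)
  hence "real L \<le> 8 * real q * T / \<mu> + 1" using of_int_ceiling_le_add_one by simp
  also have "\<dots> \<le> (8 * T / \<mu> + 1) * real q" using \<open>q \<ge> 1\<close> by (simp add: algebra_simps)
  finally have L_hi: "real L \<le> (8 * T / \<mu> + 1) * real q" .
  show "L \<ge> 1" using pos L_lo by linarith
  have "0 < n div q" using \<open>q \<ge> 1\<close> \<open>q \<le> n\<close> by (subst div_greater_zero_iff) auto
  thus "n div q \<ge> 1" by simp
  have "q * b \<le> n" by (simp add: b_def)
  hence qb: "real q * real b \<le> real n" by (metis of_nat_le_iff of_nat_mult)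
  have "n < q * b + q" using \<open>q \<ge> 1\<close> dividend_less_div_times[of q n] by (simp add: b_def mult.commute)
  also have "\<dots> \<le> 2 * q * b" using \<open>n div q \<ge> 1\<close> by (simp add: b_def)
  finally have "2 * real n * T < 2 * (2 * real q * real b) * T"
    using \<open>T > 0\<close> by (simp flip: of_nat_mult)
  also have "\<dots> = (8 * real q * T / \<mu>) * (\<mu> / 2) * real b" using \<open>\<mu> > 0\<close> by (simp add: field_simps)
  also have "\<dots> \<le> real L * \<mu>B * real b"
    using L_lo \<open>\<mu> \<le> 2 * \<mu>B\<close> \<open>\<mu> > 0\<close> by (intro mult_right_mono mult_mono) auto
  finally show "2 * real n * T < real (L * (n div q)) * \<mu>B" by (simp add: b_def mult_ac)
  have "real L * real b \<le> (8 * T / \<mu> + 1) * real q * real b" using L_hi by (simp add: mult_right_mono)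
  also have "\<dots> \<le> (8 * T / \<mu> + 1) * real n"
    using qb \<open>\<mu> > 0\<close> \<open>T > 0\<close> by (simp add: mult.assoc mult_left_mono)
  finally show "real (L * (n div q)) \<le> (8 * T / \<mu> + 1) * real n" by (simp add: b_def)
qed

lemma eventually_exp_tails_le:
  fixes q L J :: nat and e B \<theta> \<eta> :: real
  assumes "q \<ge> 1" "L \<ge> 1" "e > 0" "B > 0" "\<theta> > 0" "\<eta> > 0"
  shows "\<forall>\<^sub>F n in sequentially. exp (-2 * real (L * (n div q)) * e\<^sup>2 / B\<^sup>2)
    + real (L*(J+1)) * exp (-2 * real (n div q) * \<theta>\<^sup>2) \<le> \<eta> / 2"
proof -
  have "L*(J+1) > 0" using \<open>L \<ge> 1\<close> by simp
  hence LJ: "real (L*(J+1)) > 0" by (simp only: of_nat_0_less_iff)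
  have "\<forall>\<^sub>F n in sequentially. exp (- (2 * e\<^sup>2 / B\<^sup>2) * real (n div q)) \<le> \<eta> / 4"
    using assms by (intro eventually_exp_div_le) auto
  moreover have "\<forall>\<^sub>F n in sequentially. exp (- (2 * \<theta>\<^sup>2) * real (n div q)) \<le> \<eta> / (4 * real (L*(J+1)))"
    using assms LJ by (intro eventually_exp_div_le divide_pos_pos mult_pos_pos) auto
  ultimately show ?thesis
  proof eventually_elim
    case (elim n)
    have "real (n div q) \<le> real (L * (n div q))" using \<open>L \<ge> 1\<close> by (metis mult_le_mono1 mult_1 of_nat_mono)
    hence "(2 * e\<^sup>2 / B\<^sup>2) * real (n div q) \<le> (2 * e\<^sup>2 / B\<^sup>2) * real (L * (n div q))"
      by (intro mult_left_mono) simp_all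
    hence "exp (-2 * real (L * (n div q)) * e\<^sup>2 / B\<^sup>2) \<le> exp (- (2 * e\<^sup>2 / B\<^sup>2) * real (n div q))"
      by (simp add: mult_ac)
    moreover have "real (L*(J+1)) * exp (-2 * real (n div q) * \<theta>\<^sup>2)
        \<le> real (L*(J+1)) * (\<eta> / (4 * real (L*(J+1))))"
      using elim(2) LJ by (intro mult_left_mono) (simp_all add: mult_ac)
    moreover have "real (L*(J+1)) * (\<eta> / (4 * real (L*(J+1)))) = \<eta> / 4"
      using LJ by (simp del: of_nat_mult of_nat_add)
    ultimately show ?case using elim(1) by linarith
  qed
qed

context prob_space
begin

lemma prob_Rbar_le_of_block_parameters:
  fixes V W :: "nat \<Rightarrow> 'a \<Rightarrow> real" and D :: "real measure" and B :: real
  defines "\<mu>B \<equiv> expectation (\<lambda>\<omega>. max 0 (min (V 0 \<omega>) B))"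
    and "eB \<equiv> expectation (\<lambda>\<omega>. max 0 (V 0 \<omega> - B))"
  assumes V_indep: "indep_vars (\<lambda>_. borel) V UNIV"
    and V_ident: "\<And>i. distr M borel (V i) = distr M borel (V 0)"
    and V_pos: "\<And>i \<omega>. \<omega> \<in> space M \<Longrightarrow> V i \<omega> > 0" and V_int: "integrable M (V 0)"
    and W_indep: "indep_vars (\<lambda>_. borel) W UNIV" and W_distr: "\<And>i. distr M borel (W i) = D"
    and W_pos: "\<And>i \<omega>. \<omega> \<in> space M \<Longrightarrow> W i \<omega> > 0"
    and cells: "\<And>j. j \<le> J \<Longrightarrow> measure D (grid_cell h J j) < \<theta>"
    and n: "n \<ge> 1" and b: "b \<ge> 1" and h: "h > 0" and B: "B > 0" and \<theta>: "\<theta> > 0" and T: "T > 0"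
    and horizon: "2 * real n * T < real (L*b) * \<mu>B"
    and blocks: "real (L*b) \<le> C * real n"
    and truncation: "4 * real b * B \<le> real n * h"
    and eps: "2 * \<theta> * C \<le> \<epsilon>"
    and markov: "8 * C * eB \<le> \<eta> * h"
    and tails: "exp (-2 * real (L*b) * (\<mu>B/2)\<^sup>2 / B\<^sup>2) + real (L*(J+1)) * exp (-2 * real b * \<theta>\<^sup>2) \<le> \<eta>/2"
  shows "1 - \<eta> \<le> prob {\<omega>\<in>space M. \<forall>t\<in>{0..T}. \<forall>x\<ge>0.
    Rbar n (\<lambda>i. V i \<omega>) (\<lambda>i. W i \<omega>) t (interval_I (h/4) x) \<le> \<epsilon>}"
proof -
  have [measurable]: "V i \<in> borel_measurable M" "W i \<in> borel_measurable M" for i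
    using V_indep W_indep by (auto simp: indep_vars_def)
  have "0 < 2 * real n * T" using n T by simp
  hence "0 < real (L*b) * \<mu>B" using horizon by linarith
  hence Lb: "0 < L*b" by (metis mult_eq_0_iff of_nat_0 gr0I less_irrefl)
  hence "0 < C * real n" using blocks by (metis of_nat_0_less_iff order_less_le_trans)
  hence "C > 0" using n by (simp add: zero_less_mult_iff)
  define E1 where "E1 = {\<omega>\<in>space M. (\<Sum>i<L*b. max 0 (min (V i \<omega>) B)) \<le> real (L*b) * (\<mu>B / 2)}"
  define E2 where "E2 = {\<omega>\<in>space M. real n * h / 4 \<le> (\<Sum>j<L*b. max 0 (V j \<omega> - B))}"
  define E3 where "E3 = {\<omega>\<in>space M. \<exists>l<L. \<exists>j\<le>J. measure D (grid_cell h J j) + \<theta>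
    \<le> (\<Sum>i\<in>{l*b..<Suc l*b}. indicator (grid_cell h J j) (W i \<omega>)) / real b}"
  have [measurable]: "E1 \<in> events" "E2 \<in> events" "E3 \<in> events" unfolding E1_def E2_def E3_def by measurable
  have "prob E2 \<le> real (L*b) * eB / (real n * h / 4)"
    unfolding E2_def eB_def using n h by (intro prob_sum_excess_ge V_ident V_int) auto
  also have "\<dots> \<le> C * real n * eB / (real n * h / 4)"
    using blocks n h eB_def by (intro divide_right_mono mult_right_mono integral_nonneg_AE) auto
  also have "\<dots> \<le> \<eta> / 2" using markov n h by (simp add: field_simps)
  finally have "prob E2 \<le> \<eta> / 2" .
  moreover have "prob E1 \<le> exp (-2 * real (L*b) * (\<mu>B/2)\<^sup>2 / B\<^sup>2)"
    unfolding E1_def \<mu>B_def by (rule prob_truncated_sum_le[OF V_indep V_ident Lb B])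
  moreover have "prob E3 \<le> real (L*(J+1)) * exp (-2 * real b * \<theta>\<^sup>2)"
    unfolding E3_def using \<theta> by (intro prob_block_overloaded[OF W_indep W_distr _ b]) auto
  moreover have "prob (E1 \<union> E2 \<union> E3) \<le> prob E1 + prob E2 + prob E3"
    by (intro order_trans[OF measure_subadditive add_right_mono] measure_subadditive) auto
  ultimately have "prob (E1 \<union> E2 \<union> E3) \<le> \<eta>" using tails by simp
  hence "1 - \<eta> \<le> prob (space M - (E1 \<union> E2 \<union> E3))" by (subst prob_compl) auto
  also have "\<dots> \<le> prob {\<omega>\<in>space M. \<forall>t\<in>{0..T}. \<forall>x\<ge>0.
    Rbar n (\<lambda>i. V i \<omega>) (\<lambda>i. W i \<omega>) t (interval_I (h/4) x) \<le> \<epsilon>}"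
  proof (intro finite_measure_mono sets_Rbar_uniformly_le subsetI CollectI conjI ballI allI impI)
    fix \<omega> t x assume \<omega>: "\<omega> \<in> space M - (E1 \<union> E2 \<union> E3)" and t: "t \<in> {0..T}"
    have "real n * T < real (L*b) * (\<mu>B / 2)" using horizon by simp
    hence horizon_\<omega>: "real n * T < (\<Sum>i<L*b. max 0 (min (V i \<omega>) B))" using \<omega> by (auto simp: E1_def)
    have cell_count: "(\<Sum>i\<in>{l*b..<Suc l*b}. indicator (grid_cell h J j) (W i \<omega>)) \<le> 2 * \<theta> * real b"
      if "l < L" "j \<le> J" for l j
    proof -
      have "\<not> measure D (grid_cell h J j) + \<theta>
          \<le> (\<Sum>i\<in>{l*b..<Suc l*b}. indicator (grid_cell h J j) (W i \<omega>)) / real b"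
        using \<omega> that unfolding E3_def by blast
      hence "(\<Sum>i\<in>{l*b..<Suc l*b}. indicator (grid_cell h J j) (W i \<omega>)) / real b < measure D (grid_cell h J j) + \<theta>"
        by simp
      also have "\<dots> \<le> 2 * \<theta>" using cells[OF that(2)] by simp
      finally show ?thesis using b by (simp add: divide_less_eq mult.commute)
    qed
    have "real L * (2 * \<theta> * real b) = 2 * \<theta> * real (L*b)" by simp
    also have "\<dots> \<le> 2 * \<theta> * (C * real n)" using \<theta> by (intro mult_left_mono[OF blocks]) simp
    also have "\<dots> \<le> \<epsilon> * real n" using mult_right_mono[OF eps, of "real n"] by simp
    finally show "Rbar n (\<lambda>i. V i \<omega>) (\<lambda>i. W i \<omega>) t (interval_I (h/4) x) \<le> \<epsilon>"
      using \<omega> by (intro Rbar_le_of_block_bounds[OF _ _ n b h horizon_\<omega> _ truncation cell_count _ t] V_pos W_pos)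
        (auto simp: E2_def)
  qed (use V_pos T n in \<open>auto intro: less_imp_le\<close>)
  finally show ?thesis .
qed

lemma eventually_prob_Rbar_le_of_cells:
  fixes V :: "nat \<Rightarrow> 'a \<Rightarrow> real" and W :: "nat \<Rightarrow> nat \<Rightarrow> 'a \<Rightarrow> real" and Gn :: "nat \<Rightarrow> real measure"
  assumes V_indep: "indep_vars (\<lambda>_. borel) V UNIV"
    and V_ident: "\<And>i. distr M borel (V i) = distr M borel (V 0)"
    and V_pos: "\<And>i \<omega>. \<omega> \<in> space M \<Longrightarrow> V i \<omega> > 0" and V_int: "integrable M (V 0)"
    and mean_pos: "expectation (V 0) > 0"
    and W_indep: "\<And>n. n \<ge> 1 \<Longrightarrow> indep_vars (\<lambda>_. borel) (W n) UNIV"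
    and W_distr: "\<And>n i. n \<ge> 1 \<Longrightarrow> distr M borel (W n i) = Gn n"
    and W_pos: "\<And>n i \<omega>. n \<ge> 1 \<Longrightarrow> \<omega> \<in> space M \<Longrightarrow> W n i \<omega> > 0"
    and cells: "\<forall>\<^sub>F n in sequentially. \<forall>j\<in>{..J}. measure (Gn n) (grid_cell h J j) < \<theta>"
    and h: "h > 0" and \<theta>: "\<theta> > 0" and T: "T > 0" and \<eta>: "\<eta> > 0"
    and eps: "2 * \<theta> * (8 * T / expectation (V 0) + 1) \<le> \<epsilon>"
  shows "\<forall>\<^sub>F n in sequentially. 1 - \<eta> \<le> prob {\<omega>\<in>space M. \<forall>t\<in>{0..T}. \<forall>x\<ge>0.
    Rbar n (\<lambda>i. V i \<omega>) (\<lambda>i. W n i \<omega>) t (interval_I (h/4) x) \<le> \<epsilon>}"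
proof -
  have [measurable]: "V 0 \<in> borel_measurable M" using V_indep by (auto simp: indep_vars_def)
  define \<mu> where "\<mu> = expectation (V 0)"
  define C where "C = 8 * T / \<mu> + 1"
  have "C > 0" using T mean_pos by (simp add: C_def \<mu>_def add_pos_pos)
  obtain B where "B > 0" and eB: "expectation (\<lambda>\<omega>. max 0 (V 0 \<omega> - B)) < min (\<mu> / 2) (\<eta> * h / (8 * C))"
    and \<mu>B: "expectation (\<lambda>\<omega>. max 0 (min (V 0 \<omega>) B)) = \<mu> - expectation (\<lambda>\<omega>. max 0 (V 0 \<omega> - B))"
    using truncation_level_exists[OF _ V_int, of "min (\<mu> / 2) (\<eta> * h / (8 * C))"] V_pos mean_pos \<eta> h \<open>C > 0\<close>
    by (auto simp: \<mu>_def less_imp_le)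
  define \<mu>B where "\<mu>B = expectation (\<lambda>\<omega>. max 0 (min (V 0 \<omega>) B))"
  have "\<mu> \<le> 2 * \<mu>B" using eB \<mu>B by (simp add: \<mu>B_def)
  have markov: "8 * C * expectation (\<lambda>\<omega>. max 0 (V 0 \<omega> - B)) \<le> \<eta> * h"
    using \<open>C > 0\<close> eB by (simp add: field_simps)
  define q where "q = nat \<lceil>4 * B / h\<rceil> + 1"
  have "4 * B / h \<le> real q" unfolding q_def by linarith
  hence q: "q \<ge> 1" "4 * B \<le> h * real q" using h by (auto simp: q_def divide_le_eq mult.commute)
  define L where "L = nat \<lceil>8 * real q * T / \<mu>\<rceil>"
  note bounds = block_count_bounds[OF mean_pos[folded \<mu>_def] T \<open>\<mu> \<le> 2 * \<mu>B\<close> q(1), folded L_def C_def]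
  have "\<mu>B > 0" using \<open>\<mu> \<le> 2 * \<mu>B\<close> mean_pos by (simp add: \<mu>_def)
  have tails: "\<forall>\<^sub>F n in sequentially. exp (-2 * real (L * (n div q)) * (\<mu>B/2)\<^sup>2 / B\<^sup>2)
      + real (L*(J+1)) * exp (-2 * real (n div q) * \<theta>\<^sup>2) \<le> \<eta> / 2"
    using \<open>\<mu>B > 0\<close> \<open>B > 0\<close> by (intro eventually_exp_tails_le q(1) bounds(1)[OF order_refl] \<theta> \<eta>) simp_all
  show ?thesis
    using tails cells eventually_ge_at_top[of q]
  proof eventually_elim
    case (elim n)
    have "n \<ge> 1" using elim(3) q(1) by linarith
    have "real q * real (n div q) \<le> real n" using of_nat_mono[of "q * (n div q)" n] by simp
    hence "h * real q * real (n div q) \<le> h * real n" using h by (simp add: mult.assoc)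
    moreover have "4 * real (n div q) * B \<le> h * real q * real (n div q)"
      using mult_right_mono[OF q(2), of "real (n div q)"] by (simp add: mult_ac)
    ultimately have truncation: "4 * real (n div q) * B \<le> real n * h" by (simp add: mult.commute)
    show ?case
      using prob_Rbar_le_of_block_parameters[OF V_indep V_ident V_pos V_int W_indep[OF \<open>n \<ge> 1\<close>]
          W_distr[OF \<open>n \<ge> 1\<close>] W_pos[OF \<open>n \<ge> 1\<close>] _ \<open>n \<ge> 1\<close> bounds(2)[OF elim(3)] h \<open>B > 0\<close> \<theta> T
          bounds(3)[OF elim(3), unfolded \<mu>B_def] bounds(4)[OF elim(3)] truncation eps[folded \<mu>_def, folded C_def]
          markov elim(1)[unfolded \<mu>B_def]] elim(2)
      by simp
  qed
qed

lemma eventually_prob_Rbar_le: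
  fixes V :: "nat \<Rightarrow> 'a \<Rightarrow> real" and W :: "nat \<Rightarrow> nat \<Rightarrow> 'a \<Rightarrow> real"
    and Gn :: "nat \<Rightarrow> real measure" and G :: "real measure"
  assumes V_indep: "indep_vars (\<lambda>_. borel) V UNIV"
    and V_ident: "\<And>i. distr M borel (V i) = distr M borel (V 0)"
    and V_pos: "\<And>i \<omega>. \<omega> \<in> space M \<Longrightarrow> V i \<omega> > 0" and V_int: "integrable M (V 0)"
    and mean_pos: "expectation (V 0) > 0"
    and W_indep: "\<And>n. n \<ge> 1 \<Longrightarrow> indep_vars (\<lambda>_. borel) (W n) UNIV"
    and W_distr: "\<And>n i. n \<ge> 1 \<Longrightarrow> distr M borel (W n i) = Gn n"
    and W_pos: "\<And>n i \<omega>. n \<ge> 1 \<Longrightarrow> \<omega> \<in> space M \<Longrightarrow> W n i \<omega> > 0"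
    and Gn: "\<And>n. n \<ge> 1 \<Longrightarrow> real_distribution (Gn n)"
    and G: "real_distribution G" and atomless: "\<And>x. measure G {x} = 0"
    and conv: "weak_conv_m Gn G"
    and T: "T > 0" and \<epsilon>: "\<epsilon> > 0" and \<eta>: "\<eta> > 0"
  shows "\<exists>\<kappa>0>0. \<forall>\<kappa>. 0 < \<kappa> \<longrightarrow> \<kappa> \<le> \<kappa>0 \<longrightarrow> (\<forall>\<^sub>F n in sequentially.
    1 - \<eta> \<le> prob {\<omega>\<in>space M. \<forall>t\<in>{0..T}. \<forall>x\<ge>0. Rbar n (\<lambda>i. V i \<omega>) (\<lambda>i. W n i \<omega>) t (interval_I \<kappa> x) \<le> \<epsilon>})"
proof -
  define C where "C = 8 * T / expectation (V 0) + 1"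
  have "C > 0" using T mean_pos by (simp add: C_def add_pos_pos)
  define \<theta> where "\<theta> = \<epsilon> / (2 * C)"
  have "\<theta> > 0" and eps: "2 * \<theta> * C \<le> \<epsilon>" using \<epsilon> \<open>C > 0\<close> by (simp_all add: \<theta>_def)
  obtain h0 M0 where "h0 > 0" and G_tail: "measure G {M0<..} < \<theta>"
    and G_small: "\<And>c h. 0 \<le> c \<Longrightarrow> 0 < h \<Longrightarrow> h \<le> h0 \<Longrightarrow> measure G {c<..c+2*h} < \<theta>"
    using real_distribution_small_intervals[OF G atomless \<open>\<theta> > 0\<close>] by metis
  have "\<forall>\<^sub>F n in sequentially. 1 - \<eta> \<le> prob {\<omega>\<in>space M. \<forall>t\<in>{0..T}. \<forall>x\<ge>0.
      Rbar n (\<lambda>i. V i \<omega>) (\<lambda>i. W n i \<omega>) t (interval_I (h/4) x) \<le> \<epsilon>}" if h: "0 < h" "h \<le> h0" for h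
  proof (rule eventually_prob_Rbar_le_of_cells[OF V_indep V_ident V_pos V_int mean_pos W_indep W_distr W_pos
        _ h(1) \<open>\<theta> > 0\<close> T \<eta> eps[unfolded C_def]])
    define J where "J = nat \<lceil>M0 / h\<rceil>"
    have "M0 / h \<le> real J" unfolding J_def by linarith
    hence J: "M0 \<le> real J * h" using h by (simp add: divide_le_eq)
    have "(\<lambda>n. measure (Gn n) (grid_cell h J j)) \<longlonglongrightarrow> measure G (grid_cell h J j)" for j
      using weak_conv_tendsto_measure_intervals[OF Gn G atomless conv] h
      by (cases "j < J") (simp_all add: grid_cell_def)
    moreover have "measure G (grid_cell h J j) < \<theta>" if "j \<le> J" for j
      using grid_cell_measure_less[OF G G_tail _ h(1) J that] G_small h by auto
    ultimately show "\<forall>\<^sub>F n in sequentially. \<forall>j\<in>{..J}. measure (Gn n) (grid_cell h J j) < \<theta>"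
      by (intro eventually_ball_finite ballI order_tendstoD(2)) auto
  qed
  from this[of "4 * _"] show ?thesis using \<open>h0 > 0\<close>
    by (intro exI[of _ "h0 / 4"]) auto
qed

end

theorem lemma5p5:
  fixes M :: "'a measure"
    and K :: nat
    and lam :: "nat \<Rightarrow> real"
    and u :: "nat \<Rightarrow> nat \<Rightarrow> 'a \<Rightarrow> real"
    and g :: "nat \<Rightarrow> nat \<Rightarrow> nat \<Rightarrow> 'a \<Rightarrow> real"
    and Gn :: "nat \<Rightarrow> nat \<Rightarrow> real measure"
    and G :: "nat \<Rightarrow> real measure"
    and T \<epsilon> \<eta> :: real
  assumes P: "prob_space M"
    and lam_pos: "\<And>k. k < K \<Longrightarrow> lam k > 0"
    and u_indep: "\<And>k. k < K \<Longrightarrow> prob_space.indep_vars M (\<lambda>_. borel) (u k) UNIV"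
    and u_ident: "\<And>k i. k < K \<Longrightarrow> distr M borel (u k i) = distr M borel (u k 0)"
    and u_pos: "\<And>k i \<omega>. k < K \<Longrightarrow> \<omega> \<in> space M \<Longrightarrow> u k i \<omega> > 0"
    and u_int: "\<And>k. k < K \<Longrightarrow> integrable M (u k 0)"
    and u_mean: "\<And>k. k < K \<Longrightarrow> prob_space.expectation M (u k 0) = 1 / lam k"
    and G_dist: "\<And>k. k < K \<Longrightarrow> real_distribution (G k)"
    and G_pos: "\<And>k. k < K \<Longrightarrow> emeasure (G k) {..0} = 0"
    and G_cont: "\<And>k x. k < K \<Longrightarrow> emeasure (G k) {x} = 0"
    and G_int: "\<And>k. k < K \<Longrightarrow> integrable (G k) (\<lambda>x. x)"
    \<comment> \<open>Assumption (AA)\<close>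
    and Gn_dist: "\<And>n k. 1 \<le> n \<Longrightarrow> k < K \<Longrightarrow> real_distribution (Gn n k)"
    and Gn_int: "\<And>n k. 1 \<le> n \<Longrightarrow> k < K \<Longrightarrow> integrable (Gn n k) (\<lambda>x. x)"
    and g_indep: "\<And>n. 1 \<le> n \<Longrightarrow>
        prob_space.indep_vars M (\<lambda>_. borel) (\<lambda>(k, i). g n k i) ({..<K} \<times> UNIV)"
    and g_distr: "\<And>n k i. 1 \<le> n \<Longrightarrow> k < K \<Longrightarrow> distr M borel (g n k i) = Gn n k"
    and g_pos: "\<And>n k i \<omega>. 1 \<le> n \<Longrightarrow> k < K \<Longrightarrow> \<omega> \<in> space M \<Longrightarrow> g n k i \<omega> > 0"
    and g_u_indep: "\<And>n. 1 \<le> n \<Longrightarrow>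
        prob_space.indep_set M (gen_sigma M (\<lambda>(k, i). u k i) ({..<K} \<times> UNIV))
                               (gen_sigma M (\<lambda>(k, i). g n k i) ({..<K} \<times> UNIV))"
    and Gn_ui: "\<And>k. k < K \<Longrightarrow> ((\<lambda>m. SUP n\<in>{1..}. ennreal (\<integral>x. indicator {m<..} x * x \<partial>(Gn n k)))
                                  \<longlongrightarrow> 0) at_top"
    and Gn_weak: "\<And>k. k < K \<Longrightarrow> weak_conv_m (\<lambda>n. Gn n k) (G k)"
    and T_pos: "T > 0" and eps_pos: "\<epsilon> > 0" and eta_pos: "\<eta> > 0"
  shows "\<exists>\<kappa>>0. liminf (\<lambda>n. ereal (prob_space.prob M
            {\<omega> \<in> space M. \<forall>k<K. \<forall>t\<in>{0..T}. \<forall>x\<ge>0.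
               Rbar n (\<lambda>i. u k i \<omega>) (\<lambda>i. g n k i \<omega>) t (interval_I \<kappa> x) \<le> \<epsilon>}))
          \<ge> ereal (1 - \<eta>)"
proof -
  txt \<open>The arrival and service sequences enter only through separate union bounds.\<close>
  interpret prob_space M by (rule P)
  define Good where "Good \<kappa> n k = {\<omega> \<in> space M. \<forall>t\<in>{0..T}. \<forall>x\<ge>0.
    Rbar n (\<lambda>i. u k i \<omega>) (\<lambda>i. g n k i \<omega>) t (interval_I \<kappa> x) \<le> \<epsilon>}" for \<kappa> n k
  define \<delta> where "\<delta> = \<eta> / (real K + 1)"
  have "\<delta> > 0" and "real (card {..<K}) * \<delta> \<le> \<eta>" using eta_pos by (simp_all add: \<delta>_def field_simps)
  have "\<exists>\<kappa>>0. ereal (1 - \<eta>) \<le> liminf (\<lambda>n. ereal (prob {\<omega>\<in>space M. \<forall>k\<in>{..<K}. \<omega> \<in> Good \<kappa> n k}))"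
  proof (rule liminf_prob_all_ge[OF finite_lessThan _ _ \<open>real (card {..<K}) * \<delta> \<le> \<eta>\<close>])
    show "Good \<kappa> n k \<in> events" if "n \<ge> 1" "k \<in> {..<K}" for \<kappa> n k
      unfolding Good_def using that u_indep g_indep u_pos T_pos
      by (intro sets_Rbar_uniformly_le) (auto simp: indep_vars_def intro: less_imp_le)
    fix k assume "k \<in> {..<K}"
    hence k: "k < K" by simp
    have atomless: "measure (G k) {x} = 0" for x using G_cont[OF k] by (simp add: measure_def)
    have mean: "expectation (u k 0) > 0" using u_mean[OF k] lam_pos[OF k] by simp
    have g_row: "indep_vars (\<lambda>_. borel) (g n k) UNIV" if "1 \<le> n" for n
      using indep_vars_row[OF g_indep[OF that]] k by simp
    show "\<exists>\<kappa>0>0. \<forall>\<kappa>. 0 < \<kappa> \<longrightarrow> \<kappa> \<le> \<kappa>0 \<longrightarrow> (\<forall>\<^sub>F n in sequentially. 1 - \<delta> \<le> prob (Good \<kappa> n k))"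
      unfolding Good_def
      by (rule eventually_prob_Rbar_le[OF u_indep[OF k] u_ident[OF k] u_pos[OF k] u_int[OF k] mean g_row
          g_distr[OF _ k] g_pos[OF _ k] Gn_dist[OF _ k] G_dist[OF k] atomless Gn_weak[OF k] T_pos eps_pos
          \<open>\<delta> > 0\<close>])
  qed
  moreover have "{\<omega>\<in>space M. \<forall>k\<in>{..<K}. \<omega> \<in> Good \<kappa> n k} = {\<omega> \<in> space M. \<forall>k<K. \<forall>t\<in>{0..T}. \<forall>x\<ge>0.
      Rbar n (\<lambda>i. u k i \<omega>) (\<lambda>i. g n k i \<omega>) t (interval_I \<kappa> x) \<le> \<epsilon>}" for \<kappa> n
    by (auto simp: Good_def)
  ultimately show ?thesis by simp
qed

end
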